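(* Let $\alpha\in(0,1)$ and $n\in\mathbb{N}^\star$. Suppose there are a constant $C>0$ and nonnegative functions $H_1,\dots,H_{n+1}$ such that $$\int_{\mathbb{T}}H_k\big(|\sin\tfrac\eta2|\big)\,\mathrm{d}\eta\le C\ \ (k=1,\dots,n),\qquad \int_{\mathbb{T}}\big|H_n(|\sin\tfrac\eta2|)\big|^\alpha\big|H_{n+1}(|\sin\tfrac\eta2|)\big|^{1-\alpha}\,\mathrm{d}\eta\le C,$$ and let $\mathbb{K}:\mathbb{T}\times\mathbb{T}\to\mathbb{C}$ satisfy: (1) $\mathbb{K}$ is measurable on $\mathbb{T}\times\mathbb{T}\setminus\{(\theta,\theta):\theta\in\mathbb{T}\}$ and $|\mathbb{K}(\theta,\theta+\eta)|\le H_1(|\sin\tfrac\eta2|)$; (2) for each $\eta\in\mathbb{T}$ the map $\theta\mapsto\mathbb{K}(\theta,\theta+\eta)$ is $n$ times differentiable on $\mathbb{T}$ and $|\partial_\theta^k(\mathbb{K}(\theta,\theta+\eta))|\le H_{k+1}(|\sin\tfrac\eta2|)$ for $k=1,\dots,n$. Then the operator $\mathcal{T}f(\theta)=\int_{\mathbb{T}}\mathbb{K}(\theta,\eta)f(\eta)\,\mathrm{d}\eta$ is continuous from $C^{n-\alpha}(\mathbb{T})$ to $C^{n-\alpha}(\mathbb{T})$ and $$\|\mathcal{T}f\|_{C^{n-\alpha}(\mathbb{T})}\le C_nC\,\|f\|_{C^{n-\alpha}(\mathbb{T})},$$ with $C_n>0$ depending only on $n$.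
   Context: $\mathbb{T}=\mathbb{R}/2\pi\mathbb{Z}$, functions on $\mathbb{T}$ are $2\pi$-periodic, and $C^{n-\alpha}(\mathbb{T})$ denotes the usual Hölder space of $2\pi$-periodic functions with $n-1$ continuous derivatives whose $(n-1)$-th derivative is $(1-\alpha)$-Hölder. *)

theory Defs
  imports "HOL-Analysis.Analysis"
begin

text \<open>Functions on the torus T = R/2piZ are represented as 2pi-periodic functions on the reals.\<close>

definition periodic2pi :: "(real \<Rightarrow> 'a) \<Rightarrow> bool" where
  "periodic2pi f \<longleftrightarrow> (\<forall>x. f (x + 2 * pi) = f x)"

definition hder :: "(real \<Rightarrow> complex) \<Rightarrow> nat \<Rightarrow> real \<Rightarrow> complex" where
  "hder f k = ((\<lambda>g x. vector_derivative g (at x)) ^^ k) f"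

definition holder_semi :: "real \<Rightarrow> (real \<Rightarrow> complex) \<Rightarrow> real" where
  "holder_semi \<beta> g = (SUP p \<in> {p :: real \<times> real. fst p \<noteq> snd p}.
      cmod (g (fst p) - g (snd p)) / \<bar>fst p - snd p\<bar> powr \<beta>)"

text \<open>C^{n-alpha}(T): 2pi-periodic, n-1 times differentiable, (n-1)-th derivative
  (1-alpha)-Hoelder (hence continuous).\<close>
definition holder_space :: "nat \<Rightarrow> real \<Rightarrow> (real \<Rightarrow> complex) \<Rightarrow> bool" where
  "holder_space n \<alpha> f \<longleftrightarrow> periodic2pi f \<and>
     (\<forall>k < n - 1. \<forall>x. (hder f k has_vector_derivative hder f (Suc k) x) (at x)) \<and>
     continuous_on UNIV (hder f (n - 1)) \<and>
     (\<exists>M. \<forall>x y. cmod (hder f (n - 1) x - hder f (n - 1) y) \<le> M * \<bar>x - y\<bar> powr (1 - \<alpha>))"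

definition holder_norm :: "nat \<Rightarrow> real \<Rightarrow> (real \<Rightarrow> complex) \<Rightarrow> real" where
  "holder_norm n \<alpha> f = (\<Sum>k<n. (SUP x. cmod (hder f k x))) + holder_semi (1 - \<alpha>) (hder f (n - 1))"

definition kernel_op :: "(real \<Rightarrow> real \<Rightarrow> complex) \<Rightarrow> (real \<Rightarrow> complex) \<Rightarrow> real \<Rightarrow> complex" where
  "kernel_op K f \<theta> = (\<integral>\<eta>\<in>{0..2*pi}. K \<theta> \<eta> * f \<eta> \<partial>lborel)"

end

theory Submission
  imports Defs
begin

(* By periodicity, Tf(\<theta>) = \<integral> K(\<theta>, \<theta> + \<eta>) f(\<theta> + \<eta>) d\<eta> over one period, so \<theta> enters only
   through the kernel along the diagonals \<eta> = const and through a translate of f. For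
   k \<le> n - 1 one can therefore differentiate under the integral sign (dominated convergence)
   and apply the Leibniz rule: the k-th derivative of Tf is the integral of
   \<Sum>_j (k choose j) \<partial>_\<theta>^j K(\<theta>, \<theta> + \<eta>) f^(k-j)(\<theta> + \<eta>), which is dominated by
   2^k |f| \<Sum>_m H_m(|sin (\<eta>/2)|); this gives the sup bounds. For the H\<ouml>lder seminorm of the
   (n-1)-th derivative, a difference of \<partial>_\<theta>^j K(\<theta>, \<theta> + \<eta>) at two points is at most 2 H_(j+1)
   and, by the mean value theorem, at most |x - y| H_(j+2); the interpolation
   min (2a) (hb) \<le> 2 h^(1-\<alpha>) a^\<alpha> b^(1-\<alpha>) turns the top case j = n - 1 into exactly the
   hypothesis on H_n^\<alpha> H_(n+1)^(1-\<alpha>). The constant obtained is C_n = 2^n (n + 1)^2. *)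

section \<open>Calculus and integration on the real line\<close>

lemma has_vector_derivative_at_iff_quotient:
  fixes f :: "real \<Rightarrow> 'a::real_normed_vector"
  shows "(f has_vector_derivative D) (at x) \<longleftrightarrow> ((\<lambda>h. (f (x + h) - f x) /\<^sub>R h) \<longlongrightarrow> D) (at 0)"
proof -
  have eq: "norm (f (x + h) - f x - h *\<^sub>R D) / norm h = norm ((f (x + h) - f x) /\<^sub>R h - D)"
    if "h \<noteq> 0" for h
  proof -
    have "(f (x + h) - f x) /\<^sub>R h - D = (1 / h) *\<^sub>R (f (x + h) - f x - h *\<^sub>R D)"
      using that by (simp add: algebra_simps divide_inverse)
    then show ?thesis by (simp add: divide_inverse)
  qed
  have "(f has_vector_derivative D) (at x) \<longleftrightarrow>
      ((\<lambda>h. norm (f (x + h) - f x - h *\<^sub>R D) / norm h) \<longlongrightarrow> 0) (at 0)"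
    unfolding has_vector_derivative_def has_derivative_at using bounded_linear_scaleR_left[of D] by simp
  also have "\<dots> \<longleftrightarrow> ((\<lambda>h. norm ((f (x + h) - f x) /\<^sub>R h - D)) \<longlongrightarrow> 0) (at 0)"
    by (rule tendsto_cong) (auto simp: eventually_at_filter eq[simplified])
  also have "\<dots> \<longleftrightarrow> ((\<lambda>h. (f (x + h) - f x) /\<^sub>R h) \<longlongrightarrow> D) (at 0)"
    by (simp add: tendsto_norm_zero_iff LIM_zero_iff)
  finally show ?thesis .
qed

lemma difference_quotient_sequentially:
  fixes g :: "real \<Rightarrow> 'a::real_normed_vector"
  assumes "(g has_vector_derivative D) (at t)"
  shows "(\<lambda>i. (g (t + 1 / Suc i) - g t) /\<^sub>R (1 / Suc i)) \<longlonglongrightarrow> D"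
proof -
  have "filterlim (\<lambda>i::nat. 1 / real (Suc i)) (at 0) sequentially"
    using LIMSEQ_Suc[OF lim_inverse_n'] by (intro filterlim_atI) (simp_all add: o_def)
  from filterlim_compose[OF assms[unfolded has_vector_derivative_at_iff_quotient] this]
  show ?thesis by simp
qed

lemma has_vector_derivative_shift:
  fixes g :: "real \<Rightarrow> 'a::real_normed_vector"
  assumes "(g has_vector_derivative D) (at (t + c))"
  shows "((\<lambda>t. g (t + c)) has_vector_derivative D) (at t)"
proof -
  have "((\<lambda>t. t + c) has_vector_derivative 1) (at t)"
    by (auto intro!: derivative_eq_intros)
  from vector_diff_chain_at[OF this assms] show ?thesis by (simp add: o_def)
qed

lemma norm_diff_le_derivative_bound:
  fixes f f' :: "real \<Rightarrow> 'a::real_normed_vector"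
  assumes "\<And>t. (f has_vector_derivative f' t) (at t)" and "\<And>t. norm (f' t) \<le> B"
  shows "norm (f y - f x) \<le> B * \<bar>y - x\<bar>"
proof -
  have "norm (f y - f x) \<le> B * norm (y - x)"
  proof (rule differentiable_bound[where S=UNIV and f'="\<lambda>t h. h *\<^sub>R f' t"])
    show "(f has_derivative (\<lambda>h. h *\<^sub>R f' t)) (at t within UNIV)" for t
      using assms(1)[of t] unfolding has_vector_derivative_def by simp
    show "onorm (\<lambda>h. h *\<^sub>R f' t) \<le> B" for t
      using assms(2)[of t] by (simp add: onorm_scaleR_left[OF bounded_linear_ident] onorm_id)
  qed auto
  then show ?thesis by simp
qed

lemma powr_mult_powr_one_minus:
  fixes x a :: real
  assumes "0 \<le> x"
  shows "x powr a * x powr (1 - a) = x"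
  using assms by (simp add: powr_add[symmetric])

lemma min_le_powr_interpolation:
  fixes x y \<alpha> :: real
  assumes "0 \<le> x" "0 \<le> y" "0 < \<alpha>" "\<alpha> < 1"
  shows "min x y \<le> x powr \<alpha> * y powr (1 - \<alpha>)"
proof -
  have "min x y = min x y powr \<alpha> * min x y powr (1 - \<alpha>)"
    using assms by (simp add: powr_mult_powr_one_minus)
  also have "\<dots> \<le> x powr \<alpha> * y powr (1 - \<alpha>)"
    using assms by (intro mult_mono powr_mono2) auto
  finally show ?thesis .
qed

text \<open>Interpolates between the bound \<open>2 A\<close> and the mean value bound \<open>\<bar>x - y\<bar> B\<close>.\<close>

lemma norm_diff_le_interpolated:
  fixes g g' :: "real \<Rightarrow> 'a::real_normed_vector"
  assumes "\<And>t. (g has_vector_derivative g' t) (at t)"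
    and "\<And>t. norm (g t) \<le> A" and "\<And>t. norm (g' t) \<le> B"
    and "0 < \<alpha>" "\<alpha> < 1"
  shows "norm (g x - g y) \<le> 2 * \<bar>x - y\<bar> powr (1 - \<alpha>) * (A powr \<alpha> * B powr (1 - \<alpha>))"
proof -
  have A: "0 \<le> A" and B: "0 \<le> B"
    using assms(2,3)[of 0] norm_ge_zero order_trans by metis+
  have "norm (g x - g y) \<le> min (2 * A) (\<bar>x - y\<bar> * B)"
    using norm_diff_le_derivative_bound[OF assms(1,3), of x y] assms(2)[of x] assms(2)[of y]
      norm_triangle_ineq4[of "g x" "g y"]
    by (auto simp: mult.commute abs_minus_commute)
  also have "\<dots> \<le> (2 * A) powr \<alpha> * (\<bar>x - y\<bar> * B) powr (1 - \<alpha>)"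
    using A B assms by (intro min_le_powr_interpolation) auto
  also have "\<dots> = 2 powr \<alpha> * (\<bar>x - y\<bar> powr (1 - \<alpha>) * (A powr \<alpha> * B powr (1 - \<alpha>)))"
    using A B by (simp add: powr_mult)
  also have "\<dots> \<le> 2 * (\<bar>x - y\<bar> powr (1 - \<alpha>) * (A powr \<alpha> * B powr (1 - \<alpha>)))"
    using assms powr_mono[of \<alpha> 1 2] by (intro mult_right_mono) auto
  finally show ?thesis by simp
qed

lemma continuous_on_holder:
  fixes g :: "real \<Rightarrow> 'a::real_normed_vector"
  assumes "\<And>x y. norm (g x - g y) \<le> B * \<bar>x - y\<bar> powr \<beta>" and "0 < \<beta>"
  shows "continuous_on UNIV g"
proof (rule continuous_at_imp_continuous_on, intro ballI)
  fix x :: real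
  have "((\<lambda>y. \<bar>y - x\<bar>) \<longlongrightarrow> 0) (at x)"
    by (intro tendsto_rabs_zero LIM_zero tendsto_ident_at)
  then have "((\<lambda>y. B * \<bar>y - x\<bar> powr \<beta>) \<longlongrightarrow> 0) (at x)"
    using assms(2) by (intro tendsto_mult_right_zero tendsto_zero_powrI) auto
  then have "((\<lambda>y. g y - g x) \<longlongrightarrow> 0) (at x)"
    by (rule Lim_null_comparison[rotated]) (use assms(1) in \<open>auto intro!: always_eventually\<close>)
  then show "isCont g x"
    unfolding isCont_def by (rule LIM_zero_cancel)
qed

lemma has_vector_derivative_integral_dominated:
  fixes \<phi> \<phi>' :: "real \<Rightarrow> 'a \<Rightarrow> 'b::{banach, second_countable_topology}" and g :: "'a \<Rightarrow> real"
  assumes der: "\<And>x t. x \<in> space M \<Longrightarrow> ((\<lambda>t. \<phi> t x) has_vector_derivative \<phi>' t x) (at t)"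
    and int: "\<And>t. integrable M (\<phi> t)"
    and g: "integrable M g"
    and bound: "\<And>x t. x \<in> space M \<Longrightarrow> norm (\<phi>' t x) \<le> g x"
  shows "((\<lambda>t. integral\<^sup>L M (\<phi> t)) has_vector_derivative integral\<^sup>L M (\<phi>' t0)) (at t0)"
proof -
  define q where "q h = (\<lambda>x. (\<phi> (t0 + h) x - \<phi> t0 x) /\<^sub>R h)" for h
  have lim: "((\<lambda>h. q h x) \<longlongrightarrow> \<phi>' t0 x) (at 0)" if "x \<in> space M" for x
    using der[OF that, of t0] unfolding q_def has_vector_derivative_at_iff_quotient .
  have q_bound: "norm (q h x) \<le> g x" if "x \<in> space M" and "h \<noteq> 0" for x h
  proof -
    have "norm (\<phi> (t0 + h) x - \<phi> t0 x) \<le> g x * \<bar>(t0 + h) - t0\<bar>"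
      by (rule norm_diff_le_derivative_bound[where f'="\<lambda>t. \<phi>' t x"])
         (use der[OF \<open>x \<in> space M\<close>] bound[OF \<open>x \<in> space M\<close>] in auto)
    then show ?thesis
      using \<open>h \<noteq> 0\<close> by (simp add: q_def inverse_eq_divide pos_divide_le_eq mult.commute)
  qed
  have meas: "\<phi>' t0 \<in> borel_measurable M"
    by (rule borel_measurable_LIMSEQ_metric[OF _ difference_quotient_sequentially[OF der]])
       (use int in \<open>auto intro!: borel_measurable_integrable\<close>)
  show ?thesis
    unfolding has_vector_derivative_at_iff_quotient tendsto_at_iff_sequentially comp_def
  proof (intro allI impI)
    fix X :: "nat \<Rightarrow> real" assume X: "\<forall>i. X i \<in> UNIV - {0}" "X \<longlonglongrightarrow> 0"
    have "filterlim X (at 0) sequentially"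
      using X by (auto intro!: filterlim_atI)
    have "(\<lambda>i. integral\<^sup>L M (q (X i))) \<longlonglongrightarrow> integral\<^sup>L M (\<phi>' t0)"
    proof (rule integral_dominated_convergence[OF meas _ g])
      show "q (X i) \<in> borel_measurable M" for i
        using int unfolding q_def by (auto intro!: borel_measurable_integrable)
      show "AE x in M. (\<lambda>i. q (X i) x) \<longlonglongrightarrow> \<phi>' t0 x"
        using filterlim_compose[OF lim \<open>filterlim X (at 0) sequentially\<close>] by auto
      show "AE x in M. norm (q (X i) x) \<le> g x" for i
        using q_bound X(1) by auto
    qed
    moreover have "integral\<^sup>L M (q (X i)) =
        (integral\<^sup>L M (\<phi> (t0 + X i)) - integral\<^sup>L M (\<phi> t0)) /\<^sub>R X i" for i
      using int by (simp add: q_def integral_diff)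
    ultimately show "(\<lambda>i. (integral\<^sup>L M (\<phi> (t0 + X i)) - integral\<^sup>L M (\<phi> t0)) /\<^sub>R X i)
        \<longlonglongrightarrow> integral\<^sup>L M (\<phi>' t0)"
      by simp
  qed
qed

lemma set_integrable_le_of_nn_integral_le:
  fixes h :: "real \<Rightarrow> real"
  assumes "h \<in> borel_measurable borel" and "\<And>x. 0 \<le> h x" and "A \<in> sets borel"
    and le: "set_nn_integral lborel A (\<lambda>x. ennreal (h x)) \<le> ennreal C" and "0 \<le> C"
  shows "set_integrable lborel A h" and "(LINT x:A|lborel. h x) \<le> C"
proof -
  have eq: "(\<integral>\<^sup>+x. ennreal (indicator A x *\<^sub>R h x) \<partial>lborel) = set_nn_integral lborel A (\<lambda>x. ennreal (h x))"
    by (intro nn_integral_cong) (auto simp: indicator_def)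
  also have "\<dots> < \<infinity>"
    using le by (auto simp: top_unique intro: le_less_trans)
  finally show int: "set_integrable lborel A h"
    unfolding set_integrable_def using assms by (auto simp: integrable_iff_bounded)
  have "ennreal (LINT x:A|lborel. h x) = set_nn_integral lborel A (\<lambda>x. ennreal (h x))"
    unfolding set_lebesgue_integral_def eq[symmetric]
    by (rule nn_integral_eq_integral[symmetric])
       (use int assms in \<open>auto simp: set_integrable_def indicator_def\<close>)
  then show "(LINT x:A|lborel. h x) \<le> C"
    using le \<open>0 \<le> C\<close> by (metis ennreal_le_iff)
qed

section \<open>Periodic functions\<close>

lemma periodic2pi_add_int_mult:
  assumes "periodic2pi g"
  shows "g (x + 2 * pi * of_int k) = g x"
proof -
  have nat_mult: "g (y + 2 * pi * real m) = g y" for y m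
  proof (induction m)
    case (Suc m)
    have "y + 2 * pi * real (Suc m) = (y + 2 * pi * real m) + 2 * pi"
      by (simp add: algebra_simps)
    then show ?case
      using Suc assms unfolding periodic2pi_def by metis
  qed simp
  show ?thesis
  proof (cases "k \<ge> 0")
    case True
    then show ?thesis using nat_mult[of x "nat k"] by simp
  next
    case False
    then have "x = (x + 2 * pi * of_int k) + 2 * pi * real (nat (- k))" by simp
    then show ?thesis using nat_mult[of "x + 2 * pi * of_int k" "nat (- k)"] by metis
  qed
qed

lemma obtain_period_representative:
  obtains k :: int where "x - 2 * pi * of_int k \<in> {0..<2 * pi}"
proof -
  define k where "k = \<lfloor>x / (2 * pi)\<rfloor>"
  have "of_int k \<le> x / (2 * pi)" "x / (2 * pi) < of_int k + 1"
    unfolding k_def by linarith+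
  then have "2 * pi * of_int k \<le> x" "x < 2 * pi * of_int k + 2 * pi"
    by (simp_all add: field_simps)
  then show thesis using that[of k] by auto
qed

lemma periodic2pi_vector_derivative:
  assumes "periodic2pi g" and "\<And>x. (g has_vector_derivative g' x) (at x)"
  shows "periodic2pi g'"
  unfolding periodic2pi_def
proof
  fix x
  have "((\<lambda>y. g (y + 2 * pi)) has_vector_derivative g' (x + 2 * pi)) (at x)"
    using assms(2) by (rule has_vector_derivative_shift)
  then have "(g has_vector_derivative g' (x + 2 * pi)) (at x)"
    using assms(1) by (simp add: periodic2pi_def)
  from vector_derivative_unique_at[OF this assms(2)] show "g' (x + 2 * pi) = g' x" .
qed

lemma periodic2pi_bdd_above_norm:
  assumes "periodic2pi g" and "continuous_on UNIV g"
  shows "bdd_above (range (\<lambda>x. norm (g x)))"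
proof -
  have "compact (g ` {0..2 * pi})"
    using assms(2) by (auto intro: compact_continuous_image continuous_on_subset)
  then obtain B where B: "\<And>y. y \<in> {0..2 * pi} \<Longrightarrow> norm (g y) \<le> B"
    by (meson bounded_iff compact_imp_bounded imageI)
  have "norm (g x) \<le> B" for x
  proof -
    obtain k :: int where "x - 2 * pi * of_int k \<in> {0..<2 * pi}"
      by (rule obtain_period_representative)
    moreover have "g x = g (x - 2 * pi * of_int k)"
      using periodic2pi_add_int_mult[OF assms(1), of "x - 2 * pi * of_int k" k] by simp
    ultimately show ?thesis using B by simp
  qed
  then show ?thesis by (auto intro!: bdd_aboveI[where M=B])
qed

lemma set_integral_translate:
  fixes h :: "real \<Rightarrow> 'a::{banach, second_countable_topology}"
  assumes "set_integrable lborel {a..b} h"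
  shows "set_integrable lborel {a - t..b - t} (\<lambda>x. h (x + t))"
    and "(LINT x:{a - t..b - t}|lborel. h (x + t)) = (LINT x:{a..b}|lborel. h x)"
proof -
  let ?F = "\<lambda>x. indicator {a..b} x *\<^sub>R h x"
  have eq: "?F (t + 1 * x) = indicator {a - t..b - t} x *\<^sub>R h (x + t)" for x
    by (simp add: indicator_def algebra_simps)
  show "set_integrable lborel {a - t..b - t} (\<lambda>x. h (x + t))"
    using assms lborel_integrable_real_affine_iff[of 1 ?F t]
    unfolding set_integrable_def eq by simp
  show "(LINT x:{a - t..b - t}|lborel. h (x + t)) = (LINT x:{a..b}|lborel. h x)"
    using lborel_integral_real_affine[of 1 ?F t] unfolding set_lebesgue_integral_def eq by simp
qed

lemma periodic2pi_set_integral_window: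
  fixes g :: "real \<Rightarrow> 'a::{banach, second_countable_topology}"
  assumes per: "periodic2pi g" and int: "set_integrable lborel {0..2 * pi} g"
    and r: "0 \<le> r" "r \<le> 2 * pi"
  shows "set_integrable lborel {r..r + 2 * pi} g"
    and "(LINT x:{r..r + 2 * pi}|lborel. g x) = (LINT x:{0..2 * pi}|lborel. g x)"
proof -
  have int1: "set_integrable lborel {0..r} g" and int2: "set_integrable lborel {r..2 * pi} g"
    using r by (auto intro: set_integrable_subset[OF int])
  have "g (x - 2 * pi) = g x" for x
    using per unfolding periodic2pi_def by (metis diff_add_cancel)
  with set_integral_translate[OF int1, of "- 2 * pi"]
  have int3: "set_integrable lborel {2 * pi..r + 2 * pi} g"
    and eq3: "(LINT x:{2 * pi..r + 2 * pi}|lborel. g x) = (LINT x:{0..r}|lborel. g x)"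
    by (simp_all add: add.commute)
  have U1: "{r..r + 2 * pi} = {r..2 * pi} \<union> {2 * pi..r + 2 * pi}"
    and U2: "{0..2 * pi} = {0..r} \<union> {r..2 * pi}"
    using r by auto
  have ae1: "AE x in lborel. \<not> (x \<in> {r..2 * pi} \<and> x \<in> {2 * pi..r + 2 * pi})"
    using AE_lborel_singleton[of "2 * pi"] by eventually_elim auto
  have ae2: "AE x in lborel. \<not> (x \<in> {0..r} \<and> x \<in> {r..2 * pi})"
    using AE_lborel_singleton[of r] by eventually_elim auto
  show "set_integrable lborel {r..r + 2 * pi} g"
    unfolding U1 using int2 int3 by (intro set_integrable_Un) auto
  show "(LINT x:{r..r + 2 * pi}|lborel. g x) = (LINT x:{0..2 * pi}|lborel. g x)"
    unfolding U1 U2 using int1 int2 int3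
    by (simp add: set_integral_Un_AE[OF ae1] set_integral_Un_AE[OF ae2] eq3 add.commute)
qed

lemma periodic2pi_set_integral_shift:
  fixes g :: "real \<Rightarrow> 'a::{banach, second_countable_topology}"
  assumes per: "periodic2pi g" and int: "set_integrable lborel {0..2 * pi} g"
  shows "set_integrable lborel {0..2 * pi} (\<lambda>x. g (x + a))"
    and "(LINT x:{0..2 * pi}|lborel. g (x + a)) = (LINT x:{0..2 * pi}|lborel. g x)"
proof -
  obtain k :: int where k: "a - 2 * pi * of_int k \<in> {0..<2 * pi}"
    by (rule obtain_period_representative)
  define r where "r = a - 2 * pi * of_int k"
  have r: "0 \<le> r" "r \<le> 2 * pi"
    using k unfolding r_def by auto
  have "g (x + a) = g (x + r)" for x
    using periodic2pi_add_int_mult[OF per, of "x + r" k] unfolding r_def by (simp add: algebra_simps)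
  with set_integral_translate[OF periodic2pi_set_integral_window(1)[OF per int r], of r]
    periodic2pi_set_integral_window(2)[OF per int r]
  show "set_integrable lborel {0..2 * pi} (\<lambda>x. g (x + a))"
    and "(LINT x:{0..2 * pi}|lborel. g (x + a)) = (LINT x:{0..2 * pi}|lborel. g x)"
    by simp_all
qed

section \<open>The Leibniz rule\<close>

definition leibniz_sum :: "(nat \<Rightarrow> 'a::comm_ring_1) \<Rightarrow> (nat \<Rightarrow> 'a) \<Rightarrow> nat \<Rightarrow> 'a" where
  "leibniz_sum u v k = (\<Sum>j\<le>k. of_nat (k choose j) * (u j * v (k - j)))"

lemma leibniz_sum_Suc:
  "leibniz_sum u v (Suc k) = leibniz_sum (\<lambda>j. u (Suc j)) v k + leibniz_sum u (\<lambda>i. v (Suc i)) k"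
proof -
  define a where "a j = u j * v (Suc k - j)" for j
  have "leibniz_sum u v (Suc k) = a 0 + (\<Sum>j\<le>k. of_nat (Suc k choose Suc j) * a (Suc j))"
    unfolding leibniz_sum_def a_def by (subst sum.atMost_Suc_shift) simp
  also have "\<dots> = (\<Sum>j\<le>k. of_nat (k choose j) * a (Suc j))
      + (a 0 + (\<Sum>j\<le>k. of_nat (k choose Suc j) * a (Suc j)))"
    by (simp add: sum.distrib algebra_simps)
  also have "a 0 + (\<Sum>j\<le>k. of_nat (k choose Suc j) * a (Suc j)) = (\<Sum>j\<le>k. of_nat (k choose j) * a j)"
    using sum.atMost_Suc_shift[of "\<lambda>j. of_nat (k choose j) * a j" k] by (simp add: binomial_eq_0)
  also have "(\<Sum>j\<le>k. of_nat (k choose j) * a (Suc j)) + (\<Sum>j\<le>k. of_nat (k choose j) * a j)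
      = leibniz_sum (\<lambda>j. u (Suc j)) v k + leibniz_sum u (\<lambda>i. v (Suc i)) k"
    unfolding leibniz_sum_def a_def by (intro arg_cong2[where f="(+)"] sum.cong) (auto simp: Suc_diff_le)
  finally show ?thesis .
qed

lemma has_vector_derivative_leibniz_sum:
  fixes u v :: "nat \<Rightarrow> real \<Rightarrow> 'a::{real_normed_algebra, comm_ring_1}"
  assumes "\<And>j. j \<le> k \<Longrightarrow> (u j has_vector_derivative u (Suc j) t) (at t)"
    and "\<And>i. i \<le> k \<Longrightarrow> (v i has_vector_derivative v (Suc i) t) (at t)"
  shows "((\<lambda>t. leibniz_sum (\<lambda>j. u j t) (\<lambda>i. v i t) k) has_vector_derivative
           leibniz_sum (\<lambda>j. u j t) (\<lambda>i. v i t) (Suc k)) (at t)"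
proof -
  have "((\<lambda>t. leibniz_sum (\<lambda>j. u j t) (\<lambda>i. v i t) k) has_vector_derivative
      (\<Sum>j\<le>k. of_nat (k choose j) * (u j t * v (Suc (k - j)) t + u (Suc j) t * v (k - j) t))) (at t)"
    unfolding leibniz_sum_def using assms
    by (intro has_vector_derivative_sum has_vector_derivative_mult_right has_vector_derivative_mult) auto
  then show ?thesis
    unfolding leibniz_sum_Suc
    by (rule has_vector_derivative_eq_rhs) (simp add: leibniz_sum_def sum.distrib algebra_simps)
qed

lemma norm_leibniz_sum_le:
  fixes u v :: "nat \<Rightarrow> 'a::real_normed_field"
  assumes "\<And>j. j \<le> k \<Longrightarrow> norm (u j) \<le> U" and "\<And>i. i \<le> k \<Longrightarrow> norm (v i) \<le> V"
  shows "norm (leibniz_sum u v k) \<le> 2 ^ k * U * V"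
proof -
  have "U \<ge> 0" using assms(1)[of 0] norm_ge_zero order_trans by blast
  have "norm (leibniz_sum u v k) \<le> (\<Sum>j\<le>k. real (k choose j) * (U * V))"
    unfolding leibniz_sum_def
  proof (rule order_trans[OF norm_sum sum_mono])
    fix j assume "j \<in> {..k}"
    then have "norm (u j) * norm (v (k - j)) \<le> U * V"
      using assms \<open>U \<ge> 0\<close> by (intro mult_mono) auto
    then show "norm (of_nat (k choose j) * (u j * v (k - j))) \<le> real (k choose j) * (U * V)"
      by (simp add: norm_mult mult_left_mono)
  qed
  also have "\<dots> = 2 ^ k * U * V"
    by (simp add: sum_distrib_right[symmetric] of_nat_sum[symmetric] choose_row_sum)
  finally show ?thesis .
qed

lemma norm_leibniz_sum_diff_le:
  fixes u u' v v' :: "nat \<Rightarrow> 'a::real_normed_field"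
  assumes "\<And>j. j \<le> k \<Longrightarrow> norm (u j - u' j) \<le> du" and "\<And>j. j \<le> k \<Longrightarrow> norm (u' j) \<le> U"
    and "\<And>i. i \<le> k \<Longrightarrow> norm (v i) \<le> V" and "\<And>i. i \<le> k \<Longrightarrow> norm (v i - v' i) \<le> dv"
  shows "norm (leibniz_sum u v k - leibniz_sum u' v' k) \<le> 2 ^ k * (du * V + U * dv)"
proof -
  have "leibniz_sum u v k - leibniz_sum u' v' k
      = leibniz_sum (\<lambda>j. u j - u' j) v k + leibniz_sum u' (\<lambda>i. v i - v' i) k"
    unfolding leibniz_sum_def by (simp add: sum.distrib[symmetric] sum_subtractf[symmetric] algebra_simps)
  also have "norm \<dots> \<le> 2 ^ k * du * V + 2 ^ k * U * dv"
    using assms by (intro norm_triangle_le add_mono norm_leibniz_sum_le) auto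
  finally show ?thesis by (simp add: algebra_simps)
qed

section \<open>H\<ouml>lder spaces\<close>

lemma hder_0 [simp]: "hder g 0 = g"
  by (simp add: hder_def)

lemma hder_Suc: "hder g (Suc k) = (\<lambda>x. vector_derivative (hder g k) (at x))"
  by (simp add: hder_def)

lemma hder_eq_iterated_derivative:
  assumes "D 0 = g" and "\<And>j x. j < m \<Longrightarrow> (D j has_vector_derivative D (Suc j) x) (at x)"
    and "k \<le> m"
  shows "hder g k = D k"
  using \<open>k \<le> m\<close>
proof (induction k)
  case (Suc k)
  then have IH: "hder g k = D k" and "k < m" by simp_all
  then show ?case
    unfolding hder_Suc IH using vector_derivative_at[OF assms(2)] by (simp add: fun_eq_iff)
qed (use assms(1) in simp)

lemma
  fixes g :: "real \<Rightarrow> complex"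
  assumes "\<And>x y. cmod (g x - g y) \<le> M * \<bar>x - y\<bar> powr \<beta>"
  shows norm_diff_le_holder_semi: "cmod (g x - g y) \<le> holder_semi \<beta> g * \<bar>x - y\<bar> powr \<beta>"
    and holder_semi_le: "holder_semi \<beta> g \<le> M"
    and holder_semi_nonneg: "0 \<le> holder_semi \<beta> g"
proof -
  define Q where "Q p = cmod (g (fst p) - g (snd p)) / \<bar>fst p - snd p\<bar> powr \<beta>" for p :: "real \<times> real"
  have QM: "Q p \<le> M" if "fst p \<noteq> snd p" for p
    using that assms[of "fst p" "snd p"] by (simp add: Q_def divide_le_eq)
  then have Q_le: "Q p \<le> holder_semi \<beta> g" if "fst p \<noteq> snd p" for p
    unfolding holder_semi_def Q_def[symmetric] using that
    by (intro cSUP_upper bdd_aboveI2[where M=M]) auto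
  show "cmod (g x - g y) \<le> holder_semi \<beta> g * \<bar>x - y\<bar> powr \<beta>"
    using Q_le[of "(x, y)"] by (cases "x = y") (auto simp: Q_def divide_le_eq)
  show "holder_semi \<beta> g \<le> M"
    unfolding holder_semi_def Q_def[symmetric] using QM by (intro cSUP_least) auto
  show "0 \<le> holder_semi \<beta> g"
    using Q_le[of "(0, 1)"] by (auto simp: Q_def intro: order_trans[rotated])
qed

lemma holder_norm_le:
  assumes "\<And>k x. k < n \<Longrightarrow> cmod (hder g k x) \<le> A"
    and "\<And>x y. cmod (hder g (n - 1) x - hder g (n - 1) y) \<le> B * \<bar>x - y\<bar> powr (1 - \<alpha>)"
  shows "holder_norm n \<alpha> g \<le> real n * A + B"
proof -
  have "(SUP x. cmod (hder g k x)) \<le> A" if "k < n" for k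
    using assms(1)[OF that] by (intro cSUP_least) auto
  then have "(\<Sum>k<n. (SUP x. cmod (hder g k x))) \<le> real n * A"
    using sum_mono[of "{..<n}" "\<lambda>k. (SUP x. cmod (hder g k x))" "\<lambda>_. A"] by simp
  then show ?thesis
    unfolding holder_norm_def using holder_semi_le[OF assms(2)] by linarith
qed

lemma holder_spaceD:
  assumes "holder_space n \<alpha> f"
  shows "periodic2pi f"
    and "\<And>k x. k < n - 1 \<Longrightarrow> (hder f k has_vector_derivative hder f (Suc k) x) (at x)"
    and "continuous_on UNIV (hder f (n - 1))"
    and "\<exists>M. \<forall>x y. cmod (hder f (n - 1) x - hder f (n - 1) y) \<le> M * \<bar>x - y\<bar> powr (1 - \<alpha>)"
  using assms unfolding holder_space_def by blast+

context
  fixes n :: nat and \<alpha> :: real and f :: "real \<Rightarrow> complex"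
  assumes f_holder: "holder_space n \<alpha> f"
begin

lemmas holder_space_has_vector_derivative = holder_spaceD(2)[OF f_holder]

lemma holder_space_continuous:
  assumes "k \<le> n - 1"
  shows "continuous_on UNIV (hder f k)"
proof (cases "k = n - 1")
  case True
  then show ?thesis using holder_spaceD(3)[OF f_holder] by simp
next
  case False
  with assms have "k < n - 1" by simp
  then have "(hder f k has_vector_derivative hder f (Suc k) x) (at x within UNIV)" for x
    by (simp add: holder_space_has_vector_derivative)
  then show ?thesis by (rule continuous_on_vector_derivative)
qed

lemma holder_space_periodic:
  "k \<le> n - 1 \<Longrightarrow> periodic2pi (hder f k)"
proof (induction k)
  case 0
  then show ?case using holder_spaceD(1)[OF f_holder] by simp
next
  case (Suc k)
  then have "periodic2pi (hder f k)" and "k < n - 1" by simp_all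
  then show ?case
    by (rule periodic2pi_vector_derivative[OF _ holder_space_has_vector_derivative])
qed

lemma holder_space_holder:
  obtains M where "\<And>x y. cmod (hder f (n - 1) x - hder f (n - 1) y) \<le> M * \<bar>x - y\<bar> powr (1 - \<alpha>)"
  using holder_spaceD(4)[OF f_holder] by blast

lemma holder_space_norm_le_SUP:
  assumes "k \<le> n - 1"
  shows "cmod (hder f k x) \<le> (SUP y. cmod (hder f k y))"
proof (rule cSUP_upper)
  show "bdd_above (range (\<lambda>y. cmod (hder f k y)))"
    using assms by (intro periodic2pi_bdd_above_norm holder_space_periodic holder_space_continuous)
qed simp

lemma holder_space_SUP_nonneg:
  assumes "k < n"
  shows "0 \<le> (SUP y. cmod (hder f k y))"
  using assms by (intro order_trans[OF norm_ge_zero holder_space_norm_le_SUP]) simp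

lemma holder_semi_hder_nonneg: "0 \<le> holder_semi (1 - \<alpha>) (hder f (n - 1))"
proof -
  obtain M where "\<And>x y. cmod (hder f (n - 1) x - hder f (n - 1) y) \<le> M * \<bar>x - y\<bar> powr (1 - \<alpha>)"
    using holder_space_holder by blast
  then show ?thesis by (rule holder_semi_nonneg)
qed

lemma holder_norm_nonneg: "0 \<le> holder_norm n \<alpha> f"
  unfolding holder_norm_def using holder_space_SUP_nonneg holder_semi_hder_nonneg
  by (intro add_nonneg_nonneg sum_nonneg) auto

lemma norm_hder_le_holder_norm:
  assumes "k \<le> n - 1" and "1 \<le> n"
  shows "cmod (hder f k x) \<le> holder_norm n \<alpha> f"
proof -
  have "cmod (hder f k x) \<le> (SUP y. cmod (hder f k y))"
    using assms(1) by (rule holder_space_norm_le_SUP)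
  also have "\<dots> \<le> (\<Sum>j<n. (SUP y. cmod (hder f j y)))"
    using assms holder_space_SUP_nonneg by (intro member_le_sum) auto
  also have "\<dots> \<le> holder_norm n \<alpha> f"
    unfolding holder_norm_def using holder_semi_hder_nonneg by simp
  finally show ?thesis .
qed

lemma norm_hder_diff_le_holder_norm:
  "cmod (hder f (n - 1) x - hder f (n - 1) y) \<le> holder_norm n \<alpha> f * \<bar>x - y\<bar> powr (1 - \<alpha>)"
proof -
  obtain M where M: "\<And>x y. cmod (hder f (n - 1) x - hder f (n - 1) y) \<le> M * \<bar>x - y\<bar> powr (1 - \<alpha>)"
    using holder_space_holder by blast
  have "holder_semi (1 - \<alpha>) (hder f (n - 1)) \<le> holder_norm n \<alpha> f"
    unfolding holder_norm_def using holder_space_SUP_nonneg by (auto intro!: sum_nonneg)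
  then have "holder_semi (1 - \<alpha>) (hder f (n - 1)) * \<bar>x - y\<bar> powr (1 - \<alpha>)
      \<le> holder_norm n \<alpha> f * \<bar>x - y\<bar> powr (1 - \<alpha>)"
    by (rule mult_right_mono) simp
  then show ?thesis
    using norm_diff_le_holder_semi[OF M, of x y] by linarith
qed

text \<open>Below the top order the next derivative is bounded by the norm as well, so the
  interpolation lemma applies.\<close>

lemma holder_space_hder_diff_le:
  assumes "k \<le> n - 1" and "1 \<le> n" and "0 < \<alpha>" "\<alpha> < 1"
  shows "cmod (hder f k x - hder f k y) \<le> 2 * holder_norm n \<alpha> f * \<bar>x - y\<bar> powr (1 - \<alpha>)"
proof (cases "k = n - 1")
  case True
  have "0 \<le> holder_norm n \<alpha> f * \<bar>x - y\<bar> powr (1 - \<alpha>)"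
    using holder_norm_nonneg by simp
  then show ?thesis
    using norm_hder_diff_le_holder_norm[of x y] unfolding True by linarith
next
  case False
  let ?N = "holder_norm n \<alpha> f"
  have "?N powr \<alpha> * ?N powr (1 - \<alpha>) = ?N"
    using holder_norm_nonneg by (rule powr_mult_powr_one_minus)
  moreover have "cmod (hder f k x - hder f k y) \<le> 2 * \<bar>x - y\<bar> powr (1 - \<alpha>) * (?N powr \<alpha> * ?N powr (1 - \<alpha>))"
  proof (rule norm_diff_le_interpolated)
    have "k < n - 1" using False assms(1) by simp
    then show "(hder f k has_vector_derivative hder f (Suc k) t) (at t)" for t
      by (rule holder_space_has_vector_derivative)
    show "cmod (hder f k t) \<le> ?N" "cmod (hder f (Suc k) t) \<le> ?N" for t
      using \<open>k < n - 1\<close> assms(2) by (simp_all add: norm_hder_le_holder_norm)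
  qed (use assms in auto)
  ultimately have "cmod (hder f k x - hder f k y) \<le> 2 * \<bar>x - y\<bar> powr (1 - \<alpha>) * ?N"
    by simp
  then show ?thesis by (simp only: mult_ac)
qed

end

section \<open>Kernels controlled along the diagonals\<close>

locale diagonal_kernel =
  fixes n :: nat and \<alpha> C :: real and H :: "nat \<Rightarrow> real \<Rightarrow> real" and K :: "real \<Rightarrow> real \<Rightarrow> complex"
  assumes n_pos: "1 \<le> n" and \<alpha>_pos: "0 < \<alpha>" and \<alpha>_less_one: "\<alpha> < 1" and C_pos: "0 < C"
    and H_measurable: "\<And>k. k \<in> {1..n+1} \<Longrightarrow> H k \<in> borel_measurable borel"
    and H_nonneg: "\<And>k x. k \<in> {1..n+1} \<Longrightarrow> 0 \<le> H k x"
    and H_integral: "\<And>k. k \<in> {1..n} \<Longrightarrow>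
      set_nn_integral lborel {0..2*pi} (\<lambda>\<eta>. ennreal (H k \<bar>sin (\<eta>/2)\<bar>)) \<le> ennreal C"
    and H_interpolated_integral: "set_nn_integral lborel {0..2*pi}
      (\<lambda>\<eta>. ennreal (\<bar>H n \<bar>sin (\<eta>/2)\<bar>\<bar> powr \<alpha> * \<bar>H (n+1) \<bar>sin (\<eta>/2)\<bar>\<bar> powr (1 - \<alpha>))) \<le> ennreal C"
    and K_periodic: "\<And>x y. K (x + 2*pi) y = K x y \<and> K x (y + 2*pi) = K x y"
    and K_measurable: "(\<lambda>p. K (fst p) (snd p)) \<in> borel_measurable
      (restrict_space borel {p :: real \<times> real. \<forall>m::int. snd p - fst p \<noteq> 2 * pi * of_int m})"
    and K_bound: "\<And>\<theta> \<eta>. sin (\<eta>/2) \<noteq> 0 \<Longrightarrow> cmod (K \<theta> (\<theta> + \<eta>)) \<le> H 1 \<bar>sin (\<eta>/2)\<bar>"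
    and K_derivatives: "\<And>\<eta>. sin (\<eta>/2) \<noteq> 0 \<Longrightarrow>
      \<exists>D :: nat \<Rightarrow> real \<Rightarrow> complex. D 0 = (\<lambda>\<theta>. K \<theta> (\<theta> + \<eta>))
        \<and> (\<forall>k<n. \<forall>\<theta>. (D k has_vector_derivative D (Suc k) \<theta>) (at \<theta>))
        \<and> (\<forall>k\<in>{1..n}. \<forall>\<theta>. cmod (D k \<theta>) \<le> H (k+1) \<bar>sin (\<eta>/2)\<bar>)"
begin

text \<open>On the null set \<open>\<eta> \<in> 2\<pi>\<int>\<close>, where
  the hypotheses say nothing about \<open>K\<close>, it is set to \<open>0\<close>.\<close>

definition diag_deriv :: "nat \<Rightarrow> real \<Rightarrow> real \<Rightarrow> complex" where
  "diag_deriv j \<theta> \<eta> = (if sin (\<eta>/2) \<noteq> 0 then hder (\<lambda>t. K t (t + \<eta>)) j \<theta> else 0)"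

definition H_sum :: "real \<Rightarrow> real" where
  "H_sum \<eta> = (\<Sum>m\<in>{1..n}. H m \<bar>sin (\<eta>/2)\<bar>)"

definition H_interp :: "real \<Rightarrow> real" where
  "H_interp \<eta> = \<bar>H n \<bar>sin (\<eta>/2)\<bar>\<bar> powr \<alpha> * \<bar>H (n+1) \<bar>sin (\<eta>/2)\<bar>\<bar> powr (1 - \<alpha>)"

lemma diag_deriv_0: "diag_deriv 0 \<theta> \<eta> = (if sin (\<eta>/2) \<noteq> 0 then K \<theta> (\<theta> + \<eta>) else 0)"
  by (simp add: diag_deriv_def)

lemma diag_deriv_eq_derivatives:
  assumes "sin (\<eta>/2) \<noteq> 0"
  obtains D :: "nat \<Rightarrow> real \<Rightarrow> complex"
  where "\<And>k. k \<le> n \<Longrightarrow> (\<lambda>\<theta>. diag_deriv k \<theta> \<eta>) = D k"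
    and "\<And>k \<theta>. k < n \<Longrightarrow> (D k has_vector_derivative D (Suc k) \<theta>) (at \<theta>)"
    and "\<And>k \<theta>. k \<in> {1..n} \<Longrightarrow> cmod (D k \<theta>) \<le> H (k+1) \<bar>sin (\<eta>/2)\<bar>"
proof -
  obtain D where D0: "D 0 = (\<lambda>\<theta>. K \<theta> (\<theta> + \<eta>))"
    and D: "\<And>k \<theta>. k < n \<Longrightarrow> (D k has_vector_derivative D (Suc k) \<theta>) (at \<theta>)"
    and bound: "\<And>k \<theta>. k \<in> {1..n} \<Longrightarrow> cmod (D k \<theta>) \<le> H (k+1) \<bar>sin (\<eta>/2)\<bar>"
    using K_derivatives[OF assms] by blast
  have eq: "(\<lambda>\<theta>. diag_deriv k \<theta> \<eta>) = D k" if "k \<le> n" for k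
    using hder_eq_iterated_derivative[where D=D and m=n, OF D0 D that] assms
    by (simp add: diag_deriv_def)
  show thesis using that eq D bound by blast
qed

lemma has_vector_derivative_diag_deriv:
  assumes "j < n"
  shows "((\<lambda>\<theta>. diag_deriv j \<theta> \<eta>) has_vector_derivative diag_deriv (Suc j) \<theta> \<eta>) (at \<theta>)"
proof (cases "sin (\<eta>/2) = 0")
  case True
  then show ?thesis by (simp add: diag_deriv_def)
next
  case False
  then obtain D where "\<And>k. k \<le> n \<Longrightarrow> (\<lambda>\<theta>. diag_deriv k \<theta> \<eta>) = D k"
    and "\<And>k \<theta>. k < n \<Longrightarrow> (D k has_vector_derivative D (Suc k) \<theta>) (at \<theta>)"
    by (metis diag_deriv_eq_derivatives)
  with assms show ?thesis by (metis Suc_leI less_imp_le_nat)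
qed

lemma norm_diag_deriv_le:
  assumes "j \<le> n"
  shows "cmod (diag_deriv j \<theta> \<eta>) \<le> H (Suc j) \<bar>sin (\<eta>/2)\<bar>"
proof (cases "sin (\<eta>/2) = 0")
  case True
  then show ?thesis using assms H_nonneg by (simp add: diag_deriv_def)
next
  case False
  then obtain D where "\<And>k. k \<le> n \<Longrightarrow> (\<lambda>\<theta>. diag_deriv k \<theta> \<eta>) = D k"
    and "\<And>k \<theta>. k \<in> {1..n} \<Longrightarrow> cmod (D k \<theta>) \<le> H (k+1) \<bar>sin (\<eta>/2)\<bar>"
    by (metis diag_deriv_eq_derivatives)
  with assms False K_bound show ?thesis
    by (cases j) (auto simp: diag_deriv_0 fun_eq_iff)
qed

lemma diag_deriv_0_measurable: "(\<lambda>\<eta>. diag_deriv 0 \<theta> \<eta>) \<in> borel_measurable borel"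
proof -
  define \<Omega> where "\<Omega> = {\<eta>::real. sin (\<eta>/2) \<noteq> 0}"
  define S where "S = {p :: real \<times> real. \<forall>m::int. snd p - fst p \<noteq> 2 * pi * of_int m}"
  have "(\<lambda>\<eta>. (\<theta>, \<theta> + \<eta>)) \<in> measurable (restrict_space borel \<Omega>) (restrict_space borel S)"
  proof (rule measurable_restrict_space3)
    show "(\<lambda>\<eta>. (\<theta>, \<theta> + \<eta>)) \<in> borel_measurable borel"
      by (intro borel_measurable_continuous_onI continuous_intros)
    have "sin (of_int m * pi) = 0" for m :: int
      by (simp add: sin_zero_iff_int2)
    then show "(\<lambda>\<eta>. (\<theta>, \<theta> + \<eta>)) \<in> \<Omega> \<rightarrow> S"
      by (auto simp: \<Omega>_def S_def mult.commute)
  qed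
  from measurable_compose[OF this K_measurable[folded S_def]]
  have "(\<lambda>\<eta>. K \<theta> (\<theta> + \<eta>)) \<in> borel_measurable (restrict_space borel \<Omega>)"
    by simp
  moreover have "open \<Omega>"
    unfolding \<Omega>_def by (intro open_Collect_neq continuous_intros) auto
  ultimately have "(\<lambda>\<eta>. if \<eta> \<in> \<Omega> then K \<theta> (\<theta> + \<eta>) else 0) \<in> borel_measurable borel"
    by (subst (asm) measurable_restrict_space_iff) auto
  then show ?thesis
    by (simp add: diag_deriv_0 \<Omega>_def)
qed

lemma diag_deriv_measurable:
  "j \<le> n \<Longrightarrow> (\<lambda>\<eta>. diag_deriv j \<theta> \<eta>) \<in> borel_measurable borel"
proof (induction j arbitrary: \<theta>)
  case 0
  show ?case by (rule diag_deriv_0_measurable)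
next
  case (Suc j)
  then have IH: "\<And>\<theta>. (\<lambda>\<eta>. diag_deriv j \<theta> \<eta>) \<in> borel_measurable borel" and "j < n"
    by simp_all
  show ?case
  proof (rule borel_measurable_LIMSEQ_metric)
    show "(\<lambda>\<eta>. (diag_deriv j (\<theta> + 1 / Suc i) \<eta> - diag_deriv j \<theta> \<eta>) /\<^sub>R (1 / Suc i))
        \<in> borel_measurable borel" for i
      using IH by measurable
    show "(\<lambda>i. (diag_deriv j (\<theta> + 1 / Suc i) \<eta> - diag_deriv j \<theta> \<eta>) /\<^sub>R (1 / Suc i))
        \<longlonglongrightarrow> diag_deriv (Suc j) \<theta> \<eta>" for \<eta>
      by (rule difference_quotient_sequentially[OF has_vector_derivative_diag_deriv[OF \<open>j < n\<close>]])
  qed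
qed

lemma H_sin_measurable:
  "m \<in> {1..n+1} \<Longrightarrow> (\<lambda>\<eta>. H m \<bar>sin (\<eta>/2)\<bar>) \<in> borel_measurable borel"
  using H_measurable by measurable

lemma set_integrable_H:
  assumes "m \<in> {1..n}"
  shows "set_integrable lborel {0..2*pi} (\<lambda>\<eta>. H m \<bar>sin (\<eta>/2)\<bar>)"
    and "(LINT \<eta>:{0..2*pi}|lborel. H m \<bar>sin (\<eta>/2)\<bar>) \<le> C"
  using set_integrable_le_of_nn_integral_le[OF H_sin_measurable _ _ H_integral[OF assms]]
    assms C_pos H_nonneg by auto

lemma H_sum_nonneg: "0 \<le> H_sum \<eta>"
  unfolding H_sum_def using H_nonneg by (intro sum_nonneg) auto

lemma H_le_H_sum: "m \<in> {1..n} \<Longrightarrow> H m \<bar>sin (\<eta>/2)\<bar> \<le> H_sum \<eta>"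
  unfolding H_sum_def using H_nonneg by (intro member_le_sum) auto

lemma norm_diag_deriv_le_H_sum:
  assumes "j \<le> n - 1"
  shows "cmod (diag_deriv j \<theta> \<eta>) \<le> H_sum \<eta>"
proof -
  have "Suc j \<in> {1..n}" using assms n_pos by auto
  then show ?thesis
    using norm_diag_deriv_le[of j \<theta> \<eta>] H_le_H_sum[of "Suc j" \<eta>] by simp
qed

lemma set_integrable_H_sum: "set_integrable lborel {0..2*pi} H_sum"
  unfolding set_integrable_def H_sum_def scaleR_sum_right
  using set_integrable_H(1) unfolding set_integrable_def by (intro Bochner_Integration.integrable_sum) auto

lemma H_sum_integral_le: "(LINT \<eta>:{0..2*pi}|lborel. H_sum \<eta>) \<le> real n * C"
proof -
  have "(LINT \<eta>:{0..2*pi}|lborel. H_sum \<eta>) = (\<Sum>m\<in>{1..n}. LINT \<eta>:{0..2*pi}|lborel. H m \<bar>sin (\<eta>/2)\<bar>)"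
    unfolding set_lebesgue_integral_def H_sum_def scaleR_sum_right
    using set_integrable_H(1) unfolding set_integrable_def by (intro Bochner_Integration.integral_sum) auto
  also have "\<dots> \<le> (\<Sum>m\<in>{1..n}. C)"
    using set_integrable_H(2) by (intro sum_mono) auto
  finally show ?thesis by simp
qed

lemma H_interp_nonneg: "0 \<le> H_interp \<eta>"
  by (simp add: H_interp_def)

lemma set_integrable_H_interp: "set_integrable lborel {0..2*pi} H_interp"
  and H_interp_integral_le: "(LINT \<eta>:{0..2*pi}|lborel. H_interp \<eta>) \<le> C"
proof -
  have "H_interp \<in> borel_measurable borel"
    unfolding H_interp_def using n_pos
    by (intro borel_measurable_times measurable_abs_powr H_sin_measurable) auto
  from set_integrable_le_of_nn_integral_le[OF this H_interp_nonneg _ _ less_imp_le[OF C_pos]]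
  show "set_integrable lborel {0..2*pi} H_interp" "(LINT \<eta>:{0..2*pi}|lborel. H_interp \<eta>) \<le> C"
    using H_interpolated_integral unfolding H_interp_def by auto
qed

text \<open>For \<open>j = n - 1\<close> the interpolation weight is the integrand of
  \<open>H_interpolated_integral\<close>; below that both factors are dominated by \<open>H_sum\<close>.\<close>

lemma interpolation_weight_le:
  assumes "j \<le> n - 1"
  shows "H (Suc j) \<bar>sin (\<eta>/2)\<bar> powr \<alpha> * H (Suc (Suc j)) \<bar>sin (\<eta>/2)\<bar> powr (1 - \<alpha>)
    \<le> H_sum \<eta> + H_interp \<eta>"
proof (cases "j = n - 1")
  case True
  then have "H (Suc j) \<bar>sin (\<eta>/2)\<bar> powr \<alpha> * H (Suc (Suc j)) \<bar>sin (\<eta>/2)\<bar> powr (1 - \<alpha>) = H_interp \<eta>"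
    using n_pos H_nonneg by (simp add: H_interp_def)
  then show ?thesis using H_sum_nonneg by simp
next
  case False
  with assms have "Suc j \<in> {1..n}" "Suc (Suc j) \<in> {1..n}" by auto
  then have "H (Suc j) \<bar>sin (\<eta>/2)\<bar> powr \<alpha> * H (Suc (Suc j)) \<bar>sin (\<eta>/2)\<bar> powr (1 - \<alpha>)
      \<le> H_sum \<eta> powr \<alpha> * H_sum \<eta> powr (1 - \<alpha>)"
    using H_nonneg H_le_H_sum \<alpha>_pos \<alpha>_less_one by (intro mult_mono powr_mono2) auto
  also have "\<dots> = H_sum \<eta>"
    using H_sum_nonneg by (rule powr_mult_powr_one_minus)
  finally show ?thesis using H_interp_nonneg[of \<eta>] by simp
qed

lemma norm_diag_deriv_diff_le:
  assumes "j \<le> n - 1"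
  shows "cmod (diag_deriv j x \<eta> - diag_deriv j y \<eta>)
    \<le> 2 * \<bar>x - y\<bar> powr (1 - \<alpha>) * (H_sum \<eta> + H_interp \<eta>)"
proof -
  have "j < n" using assms n_pos by simp
  then have "cmod (diag_deriv j x \<eta> - diag_deriv j y \<eta>) \<le> 2 * \<bar>x - y\<bar> powr (1 - \<alpha>) *
      (H (Suc j) \<bar>sin (\<eta>/2)\<bar> powr \<alpha> * H (Suc (Suc j)) \<bar>sin (\<eta>/2)\<bar> powr (1 - \<alpha>))"
    using \<alpha>_pos \<alpha>_less_one
    by (intro norm_diff_le_interpolated[where g'="\<lambda>\<theta>. diag_deriv (Suc j) \<theta> \<eta>"]
        has_vector_derivative_diag_deriv norm_diag_deriv_le) auto
  also have "\<dots> \<le> 2 * \<bar>x - y\<bar> powr (1 - \<alpha>) * (H_sum \<eta> + H_interp \<eta>)"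
    using assms by (intro mult_left_mono interpolation_weight_le) auto
  finally show ?thesis .
qed

end

section \<open>The integral operator\<close>

locale kernel_operator = diagonal_kernel +
  fixes f :: "real \<Rightarrow> complex"
  assumes f_holder: "holder_space n \<alpha> f"
begin

abbreviation f_norm :: real where
  "f_norm \<equiv> holder_norm n \<alpha> f"

definition integrand :: "nat \<Rightarrow> real \<Rightarrow> real \<Rightarrow> complex" where
  "integrand k \<theta> \<eta> = leibniz_sum (\<lambda>j. diag_deriv j \<theta> \<eta>) (\<lambda>i. hder f i (\<theta> + \<eta>)) k"

definition deriv_op :: "nat \<Rightarrow> real \<Rightarrow> complex" where
  "deriv_op k \<theta> = (LINT \<eta>:{0..2*pi}|lborel. integrand k \<theta> \<eta>)"

lemma norm_hder_f_le: "i \<le> n - 1 \<Longrightarrow> cmod (hder f i x) \<le> f_norm"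
  using norm_hder_le_holder_norm[OF f_holder _ n_pos] .

lemma f_norm_nonneg: "0 \<le> f_norm"
  using holder_norm_nonneg[OF f_holder] .

lemma integrand_measurable:
  assumes "k \<le> n - 1"
  shows "integrand k \<theta> \<in> borel_measurable borel"
proof -
  have f_meas: "(\<lambda>\<eta>. hder f i (\<theta> + \<eta>)) \<in> borel_measurable borel" if "i \<le> n - 1" for i
    by (intro borel_measurable_continuous_onI
        continuous_on_compose2[OF holder_space_continuous[OF f_holder that]] continuous_intros) auto
  have K_meas: "(\<lambda>\<eta>. diag_deriv j \<theta> \<eta>) \<in> borel_measurable borel" if "j \<le> n - 1" for j
    using that n_pos by (intro diag_deriv_measurable) simp
  show ?thesis
    unfolding integrand_def[abs_def] leibniz_sum_def using assms
    by (intro borel_measurable_sum borel_measurable_times borel_measurable_const f_meas K_meas) auto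
qed

lemma norm_integrand_le:
  assumes "k \<le> n - 1"
  shows "cmod (integrand k \<theta> \<eta>) \<le> 2 ^ k * H_sum \<eta> * f_norm"
  unfolding integrand_def using assms
  by (intro norm_leibniz_sum_le norm_diag_deriv_le_H_sum norm_hder_f_le) auto

lemma set_integrable_integrand:
  assumes "k \<le> n - 1"
  shows "set_integrable lborel {0..2*pi} (integrand k \<theta>)"
proof (rule set_integrable_bound[where f="\<lambda>\<eta>. 2 ^ k * H_sum \<eta> * f_norm"])
  show "set_integrable lborel {0..2*pi} (\<lambda>\<eta>. 2 ^ k * H_sum \<eta> * f_norm)"
    using set_integrable_H_sum by (intro set_integrable_mult_left set_integrable_mult_right)
  show "set_borel_measurable lborel {0..2*pi} (integrand k \<theta>)"
    unfolding set_borel_measurable_def using integrand_measurable[OF assms] by measurable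
  show "AE \<eta> in lborel. \<eta> \<in> {0..2*pi} \<longrightarrow> cmod (integrand k \<theta> \<eta>) \<le> norm (2 ^ k * H_sum \<eta> * f_norm)"
    using norm_integrand_le[OF assms] H_sum_nonneg f_norm_nonneg
    by (intro AE_I2) (simp add: abs_mult)
qed

lemma norm_deriv_op_le:
  assumes "k \<le> n - 1"
  shows "cmod (deriv_op k \<theta>) \<le> 2 ^ k * (real n * C) * f_norm"
proof -
  have "cmod (deriv_op k \<theta>) \<le> (LINT \<eta>:{0..2*pi}|lborel. cmod (integrand k \<theta> \<eta>))"
    unfolding deriv_op_def by (rule set_integral_norm_bound[OF set_integrable_integrand[OF assms]])
  also have "\<dots> \<le> (LINT \<eta>:{0..2*pi}|lborel. 2 ^ k * H_sum \<eta> * f_norm)"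
    using assms set_integrable_H_sum norm_integrand_le
    by (intro set_integral_mono set_integrable_norm set_integrable_integrand) auto
  also have "\<dots> = 2 ^ k * (LINT \<eta>:{0..2*pi}|lborel. H_sum \<eta>) * f_norm"
    by simp
  also have "\<dots> \<le> 2 ^ k * (real n * C) * f_norm"
    using H_sum_integral_le f_norm_nonneg by (intro mult_right_mono mult_left_mono) auto
  finally show ?thesis .
qed

lemma has_vector_derivative_integrand:
  assumes "k < n - 1"
  shows "((\<lambda>t. integrand k t \<eta>) has_vector_derivative integrand (Suc k) t \<eta>) (at t)"
  unfolding integrand_def
proof (rule has_vector_derivative_leibniz_sum)
  show "((\<lambda>t. diag_deriv j t \<eta>) has_vector_derivative diag_deriv (Suc j) t \<eta>) (at t)" if "j \<le> k" for j
    using that assms by (intro has_vector_derivative_diag_deriv) simp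
  show "((\<lambda>t. hder f i (t + \<eta>)) has_vector_derivative hder f (Suc i) (t + \<eta>)) (at t)" if "i \<le> k" for i
    using that assms by (intro has_vector_derivative_shift holder_space_has_vector_derivative[OF f_holder]) simp
qed

lemma has_vector_derivative_deriv_op:
  assumes "k < n - 1"
  shows "(deriv_op k has_vector_derivative deriv_op (Suc k) \<theta>) (at \<theta>)"
proof -
  let ?I = "{0..2*pi} :: real set"
  have "((\<lambda>t. LBINT \<eta>. indicator ?I \<eta> *\<^sub>R integrand k t \<eta>) has_vector_derivative
      (LBINT \<eta>. indicator ?I \<eta> *\<^sub>R integrand (Suc k) \<theta> \<eta>)) (at \<theta>)"
  proof (rule has_vector_derivative_integral_dominated)
    show "((\<lambda>t. indicator ?I \<eta> *\<^sub>R integrand k t \<eta>) has_vector_derivative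
        indicator ?I \<eta> *\<^sub>R integrand (Suc k) t \<eta>) (at t)" for \<eta> t
      by (rule has_vector_derivative_eq_rhs[OF has_vector_derivative_scaleR[OF DERIV_const
          has_vector_derivative_integrand[OF assms]]]) simp
    show "integrable lborel (\<lambda>\<eta>. indicator ?I \<eta> *\<^sub>R integrand k t \<eta>)" for t
      using set_integrable_integrand assms unfolding set_integrable_def by simp
    show "integrable lborel (\<lambda>\<eta>. indicator ?I \<eta> *\<^sub>R (2 ^ Suc k * H_sum \<eta> * f_norm))"
      using set_integrable_mult_left[OF set_integrable_mult_right[OF set_integrable_H_sum]]
      unfolding set_integrable_def .
    show "norm (indicator ?I \<eta> *\<^sub>R integrand (Suc k) t \<eta>) \<le> indicator ?I \<eta> *\<^sub>R (2 ^ Suc k * H_sum \<eta> * f_norm)"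
      for \<eta> t
      using norm_integrand_le[of "Suc k" t \<eta>] assms by (simp add: indicator_def)
  qed
  then show ?thesis
    unfolding deriv_op_def[abs_def] set_lebesgue_integral_def .
qed

lemma periodic2pi_integrand_0: "periodic2pi (integrand 0 \<theta>)"
  unfolding periodic2pi_def
proof
  fix \<eta>
  have "sin ((\<eta> + 2 * pi) / 2) = - sin (\<eta> / 2)"
    by (simp add: add_divide_distrib sin_add)
  moreover have "K \<theta> (\<theta> + (\<eta> + 2 * pi)) = K \<theta> (\<theta> + \<eta>)"
    using K_periodic[of \<theta> "\<theta> + \<eta>"] by (simp add: add.assoc)
  moreover have "f (\<theta> + (\<eta> + 2 * pi)) = f (\<theta> + \<eta>)"
    using holder_spaceD(1)[OF f_holder] unfolding periodic2pi_def by (metis add.assoc)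
  ultimately show "integrand 0 \<theta> (\<eta> + 2 * pi) = integrand 0 \<theta> \<eta>"
    by (simp add: integrand_def leibniz_sum_def diag_deriv_0)
qed

text \<open>The substitution \<open>\<eta> \<mapsto> \<theta> + \<eta>\<close> is justified by periodicity; the diagonal, where
  \<open>diag_deriv\<close> was set to zero, is countable and hence invisible to the integral.\<close>

lemma kernel_op_eq_deriv_op_0:
  "set_integrable lborel {0..2*pi} (\<lambda>\<eta>. K \<theta> \<eta> * f \<eta>) \<and> kernel_op K f \<theta> = deriv_op 0 \<theta>"
proof -
  let ?I = "{0..2*pi} :: real set"
  define X where "X = range (\<lambda>m::int. \<theta> + 2 * pi * of_int m)"
  have off_diagonal: "indicator ?I \<eta> *\<^sub>R integrand 0 \<theta> (\<eta> + - \<theta>) = indicator ?I \<eta> *\<^sub>R (K \<theta> \<eta> * f \<eta>)"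
    if "\<eta> \<notin> X" for \<eta>
  proof -
    have "sin ((\<eta> - \<theta>) / 2) \<noteq> 0"
    proof
      assume "sin ((\<eta> - \<theta>) / 2) = 0"
      then obtain m :: int where "(\<eta> - \<theta>) / 2 = of_int m * pi"
        by (auto simp: sin_zero_iff_int2)
      then have "\<eta> = \<theta> + 2 * pi * of_int m" by (simp add: field_simps)
      then show False using that unfolding X_def by auto
    qed
    then show ?thesis by (simp add: integrand_def leibniz_sum_def diag_deriv_0)
  qed
  have "countable X" unfolding X_def by simp
  note shift = periodic2pi_set_integral_shift[OF periodic2pi_integrand_0
      set_integrable_integrand[of 0 \<theta>], of "- \<theta>"]
  have "integrable lborel (\<lambda>\<eta>. indicator ?I \<eta> *\<^sub>R integrand 0 \<theta> (\<eta> + - \<theta>))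
      \<longleftrightarrow> integrable lborel (\<lambda>\<eta>. indicator ?I \<eta> *\<^sub>R (K \<theta> \<eta> * f \<eta>))"
    by (rule integrable_discrete_difference[where X=X]) (use \<open>countable X\<close> off_diagonal in auto)
  moreover have "(LBINT \<eta>. indicator ?I \<eta> *\<^sub>R integrand 0 \<theta> (\<eta> + - \<theta>))
      = (LBINT \<eta>. indicator ?I \<eta> *\<^sub>R (K \<theta> \<eta> * f \<eta>))"
    by (rule integral_discrete_difference[where X=X]) (use \<open>countable X\<close> off_diagonal in auto)
  ultimately show ?thesis
    using shift unfolding set_integrable_def set_lebesgue_integral_def kernel_op_def deriv_op_def
    by simp
qed

lemma hder_kernel_op: "k \<le> n - 1 \<Longrightarrow> hder (kernel_op K f) k = deriv_op k"
  using kernel_op_eq_deriv_op_0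
  by (intro hder_eq_iterated_derivative[where m="n - 1"] has_vector_derivative_deriv_op) auto

lemma norm_integrand_diff_le:
  assumes "k \<le> n - 1"
  shows "cmod (integrand k x \<eta> - integrand k y \<eta>)
    \<le> 2 ^ k * (2 * \<bar>x - y\<bar> powr (1 - \<alpha>) * f_norm * (2 * H_sum \<eta> + H_interp \<eta>))"
proof -
  let ?p = "\<bar>x - y\<bar> powr (1 - \<alpha>)"
  have "cmod (integrand k x \<eta> - integrand k y \<eta>)
      \<le> 2 ^ k * (2 * ?p * (H_sum \<eta> + H_interp \<eta>) * f_norm + H_sum \<eta> * (2 * f_norm * ?p))"
    unfolding integrand_def
  proof (rule norm_leibniz_sum_diff_le)
    show "cmod (diag_deriv j x \<eta> - diag_deriv j y \<eta>) \<le> 2 * ?p * (H_sum \<eta> + H_interp \<eta>)" if "j \<le> k" for j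
      using that assms by (intro norm_diag_deriv_diff_le) simp
    show "cmod (diag_deriv j y \<eta>) \<le> H_sum \<eta>" if "j \<le> k" for j
      using that assms by (intro norm_diag_deriv_le_H_sum) simp
    show "cmod (hder f i (x + \<eta>)) \<le> f_norm" if "i \<le> k" for i
      using that assms by (intro norm_hder_f_le) simp
    show "cmod (hder f i (x + \<eta>) - hder f i (y + \<eta>)) \<le> 2 * f_norm * ?p" if "i \<le> k" for i
      using that assms holder_space_hder_diff_le[OF f_holder _ n_pos \<alpha>_pos \<alpha>_less_one, of i "x + \<eta>" "y + \<eta>"]
      by simp
  qed
  also have "\<dots> = 2 ^ k * (2 * ?p * f_norm * (2 * H_sum \<eta> + H_interp \<eta>))"
    by (simp add: algebra_simps)
  finally show ?thesis .
qed

lemma deriv_op_holder: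
  "cmod (deriv_op (n - 1) x - deriv_op (n - 1) y)
    \<le> 2 ^ n * (2 * real n + 1) * C * f_norm * \<bar>x - y\<bar> powr (1 - \<alpha>)"
proof -
  let ?p = "\<bar>x - y\<bar> powr (1 - \<alpha>)" and ?I = "{0..2*pi} :: real set"
  let ?k = "n - 1"
  have int: "set_integrable lborel ?I (\<lambda>\<eta>. integrand ?k x \<eta> - integrand ?k y \<eta>)"
    by (intro set_integral_diff(1) set_integrable_integrand) simp_all
  have int_bound: "set_integrable lborel ?I (\<lambda>\<eta>. 2 * H_sum \<eta> + H_interp \<eta>)"
    using set_integrable_H_sum set_integrable_H_interp by simp
  have "deriv_op ?k x - deriv_op ?k y = (LINT \<eta>:?I|lborel. integrand ?k x \<eta> - integrand ?k y \<eta>)"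
    unfolding deriv_op_def by (intro set_integral_diff(2)[symmetric] set_integrable_integrand) simp_all
  then have "cmod (deriv_op ?k x - deriv_op ?k y) \<le> (LINT \<eta>:?I|lborel. cmod (integrand ?k x \<eta> - integrand ?k y \<eta>))"
    using set_integral_norm_bound[OF int] by simp
  also have "\<dots> \<le> (LINT \<eta>:?I|lborel. 2 ^ ?k * (2 * ?p * f_norm * (2 * H_sum \<eta> + H_interp \<eta>)))"
    using int int_bound norm_integrand_diff_le[of ?k]
    by (intro set_integral_mono set_integrable_norm set_integrable_mult_right) auto
  also have "\<dots> = 2 ^ ?k * (2 * ?p * f_norm * (2 * (LINT \<eta>:?I|lborel. H_sum \<eta>) + (LINT \<eta>:?I|lborel. H_interp \<eta>)))"
    using set_integrable_H_sum set_integrable_H_interp by simp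
  also have "\<dots> \<le> 2 ^ ?k * (2 * ?p * f_norm * (2 * (real n * C) + C))"
    using H_sum_integral_le H_interp_integral_le f_norm_nonneg
    by (intro mult_left_mono add_mono) auto
  also have "\<dots> = 2 ^ n * (2 * real n + 1) * C * f_norm * ?p"
    using n_pos by (cases n) (simp_all add: algebra_simps)
  finally show ?thesis .
qed

lemma holder_space_kernel_op: "holder_space n \<alpha> (kernel_op K f)"
  unfolding holder_space_def
proof (intro conjI allI impI)
  show "periodic2pi (kernel_op K f)"
    unfolding periodic2pi_def kernel_op_def using K_periodic by simp
  show "(hder (kernel_op K f) k has_vector_derivative hder (kernel_op K f) (Suc k) x) (at x)"
    if "k < n - 1" for k x
    using that has_vector_derivative_deriv_op by (simp add: hder_kernel_op)
  show "continuous_on UNIV (hder (kernel_op K f) (n - 1))"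
    unfolding hder_kernel_op[OF order_refl]
    by (rule continuous_on_holder[OF deriv_op_holder]) (use \<alpha>_less_one in simp)
  show "\<exists>M. \<forall>x y. cmod (hder (kernel_op K f) (n - 1) x - hder (kernel_op K f) (n - 1) y)
      \<le> M * \<bar>x - y\<bar> powr (1 - \<alpha>)"
    unfolding hder_kernel_op[OF order_refl] using deriv_op_holder by blast
qed

lemma holder_norm_kernel_op_le:
  "holder_norm n \<alpha> (kernel_op K f) \<le> 2 ^ n * (real n + 1)\<^sup>2 * C * f_norm"
proof -
  have "cmod (hder (kernel_op K f) k x) \<le> 2 ^ n * (real n * C) * f_norm" if "k < n" for k x
  proof -
    have "cmod (hder (kernel_op K f) k x) \<le> 2 ^ k * (real n * C) * f_norm"
      using that norm_deriv_op_le[of k x] by (simp add: hder_kernel_op)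
    also have "\<dots> \<le> 2 ^ n * (real n * C) * f_norm"
      using that C_pos f_norm_nonneg by (intro mult_right_mono) (auto intro: power_increasing)
    finally show ?thesis .
  qed
  then have "holder_norm n \<alpha> (kernel_op K f)
      \<le> real n * (2 ^ n * (real n * C) * f_norm) + 2 ^ n * (2 * real n + 1) * C * f_norm"
    using deriv_op_holder by (intro holder_norm_le) (simp_all add: hder_kernel_op)
  also have "\<dots> = 2 ^ n * (real n + 1)\<^sup>2 * C * f_norm"
    by (simp add: algebra_simps power2_eq_square)
  finally show ?thesis .
qed

lemma kernel_op_bounds:
  "(\<forall>\<theta>. set_integrable lborel {0..2*pi} (\<lambda>\<eta>. K \<theta> \<eta> * f \<eta>))
    \<and> holder_space n \<alpha> (kernel_op K f)
    \<and> holder_norm n \<alpha> (kernel_op K f) \<le> 2 ^ n * (real n + 1)\<^sup>2 * C * holder_norm n \<alpha> f"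
  using kernel_op_eq_deriv_op_0 holder_space_kernel_op holder_norm_kernel_op_le by blast

end

theorem lemma6p6:
  fixes n :: nat
  assumes "n \<ge> 1"
  shows "\<exists>Cn > 0. \<forall>(\<alpha>::real) (C::real) (H :: nat \<Rightarrow> real \<Rightarrow> real) (K :: real \<Rightarrow> real \<Rightarrow> complex).
    (0 < \<alpha> \<and> \<alpha> < 1 \<and> 0 < C
     \<and> (\<forall>k\<in>{1..n+1}. H k \<in> borel_measurable borel \<and> (\<forall>x. 0 \<le> H k x))
     \<and> (\<forall>k\<in>{1..n}. set_nn_integral lborel {0..2*pi} (\<lambda>\<eta>. ennreal (H k \<bar>sin (\<eta>/2)\<bar>)) \<le> ennreal C)
     \<and> set_nn_integral lborel {0..2*pi}
         (\<lambda>\<eta>. ennreal (\<bar>H n \<bar>sin (\<eta>/2)\<bar>\<bar> powr \<alpha> * \<bar>H (n+1) \<bar>sin (\<eta>/2)\<bar>\<bar> powr (1 - \<alpha>))) \<le> ennreal C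
     \<and> (\<forall>x y. K (x + 2*pi) y = K x y \<and> K x (y + 2*pi) = K x y)
     \<and> (\<lambda>p. K (fst p) (snd p)) \<in> borel_measurable
          (restrict_space borel {p :: real \<times> real. \<forall>m::int. snd p - fst p \<noteq> 2 * pi * of_int m})
     \<and> (\<forall>\<theta> \<eta>. sin (\<eta>/2) \<noteq> 0 \<longrightarrow> cmod (K \<theta> (\<theta> + \<eta>)) \<le> H 1 \<bar>sin (\<eta>/2)\<bar>)
     \<and> (\<forall>\<eta>. sin (\<eta>/2) \<noteq> 0 \<longrightarrow>
          (\<exists>D :: nat \<Rightarrow> real \<Rightarrow> complex. D 0 = (\<lambda>\<theta>. K \<theta> (\<theta> + \<eta>))
             \<and> (\<forall>k<n. \<forall>\<theta>. (D k has_vector_derivative D (Suc k) \<theta>) (at \<theta>))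
             \<and> (\<forall>k\<in>{1..n}. \<forall>\<theta>. cmod (D k \<theta>) \<le> H (k+1) \<bar>sin (\<eta>/2)\<bar>))))
    \<longrightarrow> (\<forall>f. holder_space n \<alpha> f \<longrightarrow>
          (\<forall>\<theta>. set_integrable lborel {0..2*pi} (\<lambda>\<eta>. K \<theta> \<eta> * f \<eta>))
          \<and> holder_space n \<alpha> (kernel_op K f)
          \<and> holder_norm n \<alpha> (kernel_op K f) \<le> Cn * C * holder_norm n \<alpha> f)"
  using assms
  by (intro exI[of _ "2 ^ n * (real n + 1)\<^sup>2"] conjI allI impI kernel_operator.kernel_op_bounds)
     (auto simp: kernel_operator_def kernel_operator_axioms_def diagonal_kernel_def)

end
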